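(* Let $k\ge 3$ be an integer. Let $n=k(k+1)+2$ and let $Z_k$ be the $k$-path power with $k$-path layout $\langle v_1,\ldots,v_n\rangle$. Let $m=(2k-1)(k+1)+1$, let $J_k$ be the $k$-path power with $k$-path layout $\langle z_1,\ldots,z_m\rangle$, and let $g=k^2-1$. Then every proper induced subgraph of $Z_k$ is isomorphic to an induced subgraph of $J_k-z_g$.
   Context: For an integer $k\ge 1$ and an ordering $\langle x_1,\ldots,x_n\rangle$ of $n$ vertices, the $k$-path power with $k$-path layout $\langle x_1,\ldots,x_n\rangle$ is the graph on $\{x_1,\ldots,x_n\}$ in which, for $i<j$, $x_i$ and $x_j$ are adjacent if and only if $j-i\le k$. $J_k-z_g$ denotes $J_k$ with the vertex $z_g$ deleted. A proper induced subgraph is an induced subgraph on a proper subset of the vertex set. *)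

theory Defs
  imports Main
begin

text \<open>The k-path power with k-path layout x_1,...,x_n is modelled on the vertex
  set {1..n} (vertex i standing for x_i): for i < j, i and j are adjacent
  iff j - i \<le> k.\<close>

definition path_power_adj :: "nat \<Rightarrow> nat \<Rightarrow> nat \<Rightarrow> bool" where
  "path_power_adj k i j \<longleftrightarrow> (i < j \<and> j - i \<le> k) \<or> (j < i \<and> i - j \<le> k)"

definition iso_to_induced_subgraph ::
  "'a set \<Rightarrow> ('a \<Rightarrow> 'a \<Rightarrow> bool) \<Rightarrow> 'b set \<Rightarrow> ('b \<Rightarrow> 'b \<Rightarrow> bool) \<Rightarrow> bool" where
  "iso_to_induced_subgraph V1 E1 V2 E2 \<longleftrightarrow>
     (\<exists>f. inj_on f V1 \<and> f ` V1 \<subseteq> V2 \<and>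
          (\<forall>u\<in>V1. \<forall>v\<in>V1. E1 u v \<longleftrightarrow> E2 (f u) (f v)))"

end

theory Submission
  imports Defs
begin

text \<open>Adjacency in a path power depends only on the distance of the two indices, so it is
  invariant under translations and reflections of the layout. Some vertex v of Z_k is
  missing from the subgraph; if v \<le> g we translate Z_k - v by g - v, otherwise we reflect
  it by i \<mapsto> g + v - i. Either way v is sent to the hole g, and since J_k has
  m = n + g - 1 vertices the image stays inside J_k.\<close>

lemma path_power_adj_translate:
  "path_power_adj k (i + c) (j + c) \<longleftrightarrow> path_power_adj k i j"
  by (auto simp: path_power_adj_def)

lemma path_power_adj_reflect:
  assumes "i \<le> c" "j \<le> c"
  shows "path_power_adj k (c - i) (c - j) \<longleftrightarrow> path_power_adj k i j"
  using assms unfolding path_power_adj_def by linarith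

lemma iso_to_induced_subgraph_subset:
  assumes "iso_to_induced_subgraph V1 E1 V2 E2" "U \<subseteq> V1"
  shows "iso_to_induced_subgraph U E1 V2 E2"
  using assms unfolding iso_to_induced_subgraph_def by (meson image_mono inj_on_subset order_trans subsetD)

lemma path_power_delete_vertex_embeds_by_translation:
  assumes "v \<le> h" "n + (h - v) \<le> m"
  shows "iso_to_induced_subgraph ({1..n} - {v}) (path_power_adj k) ({1..m} - {h}) (path_power_adj k)"
  unfolding iso_to_induced_subgraph_def
proof (intro exI conjI)
  show "inj_on (\<lambda>i. i + (h - v)) ({1..n} - {v})"
    by (simp add: inj_on_def)
  show "(\<lambda>i. i + (h - v)) ` ({1..n} - {v}) \<subseteq> {1..m} - {h}"
    using assms by auto
  show "\<forall>i\<in>{1..n} - {v}. \<forall>j\<in>{1..n} - {v}.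
          path_power_adj k i j \<longleftrightarrow> path_power_adj k (i + (h - v)) (j + (h - v))"
    by (simp add: path_power_adj_translate)
qed

lemma path_power_delete_vertex_embeds_by_reflection:
  assumes "n < h + v" "h + v \<le> m + 1"
  shows "iso_to_induced_subgraph ({1..n} - {v}) (path_power_adj k) ({1..m} - {h}) (path_power_adj k)"
  unfolding iso_to_induced_subgraph_def
proof (intro exI conjI)
  show "inj_on (\<lambda>i. h + v - i) ({1..n} - {v})"
    using assms(1) by (auto simp: inj_on_def)
  show "(\<lambda>i. h + v - i) ` ({1..n} - {v}) \<subseteq> {1..m} - {h}"
    using assms by auto
  show "\<forall>i\<in>{1..n} - {v}. \<forall>j\<in>{1..n} - {v}.
          path_power_adj k i j \<longleftrightarrow> path_power_adj k (h + v - i) (h + v - j)"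
    using assms(1) by (simp add: path_power_adj_reflect)
qed

theorem mainTheorem2:
  fixes k n m g :: nat
  assumes "k \<ge> 3"
    and "n = k * (k + 1) + 2"
    and "m = (2 * k - 1) * (k + 1) + 1"
    and "g = k ^ 2 - 1"
  shows "\<forall>S. S \<subset> {1..n} \<longrightarrow>
           iso_to_induced_subgraph S (path_power_adj k) ({1..m} - {g}) (path_power_adj k)"
proof (intro allI impI)
  fix S assume S: "S \<subset> {1..n}"
  then obtain v where v: "v \<in> {1..n}" "v \<notin> S" by blast
  have square: "k * k \<ge> k + 4"
  proof -
    have "3 * k \<le> k * k" using assms(1) by (simp add: mult_le_mono1)
    then show ?thesis using assms(1) by linarith
  qed
  have g: "g + 1 = k * k" using assms(1,4) by (simp add: power2_eq_square)
  have n: "n = k * k + k + 2" using assms(2) by (simp add: algebra_simps)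
  have m: "m = 2 * (k * k) + k" using assms(1,3) by (simp add: algebra_simps diff_mult_distrib)
  have "iso_to_induced_subgraph ({1..n} - {v}) (path_power_adj k) ({1..m} - {g}) (path_power_adj k)"
  proof (cases "v \<le> g")
    case True
    then show ?thesis using v g n m by (intro path_power_delete_vertex_embeds_by_translation) auto
  next
    case False
    then show ?thesis using v g n m square by (intro path_power_delete_vertex_embeds_by_reflection) auto
  qed
  moreover have "S \<subseteq> {1..n} - {v}" using S v by blast
  ultimately show "iso_to_induced_subgraph S (path_power_adj k) ({1..m} - {g}) (path_power_adj k)"
    by (rule iso_to_induced_subgraph_subset)
qed

end
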